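(* Let $K$ be an algebraically closed field, let $V$ be a finite-dimensional vector space over $K$ with $\dim V\geq 4$, and let $\omega$ be an alternating trilinear form on $V$. Then every two-dimensional subspace of $V$ contains a nonzero vector lying in some two-dimensional $\omega$-singular subspace of $V$.
   Context: A two-dimensional subspace $L\subseteq V$ is $\omega$-singular if $\omega(a,b,v)=0$ for all $a,b\in L$, $v\in V$. *)

theory Defs
  imports Main "HOL-Computational_Algebra.Polynomial"
begin

definition alg_closed_field :: "'k::field itself \<Rightarrow> bool" where
  "alg_closed_field _ \<longleftrightarrow> (\<forall>p :: 'k poly. 0 < degree p \<longrightarrow> (\<exists>x. poly p x = 0))"

definition alternating_trilinear ::
  "('k::field \<Rightarrow> 'v::ab_group_add \<Rightarrow> 'v) \<Rightarrow> ('v \<Rightarrow> 'v \<Rightarrow> 'v \<Rightarrow> 'k) \<Rightarrow> bool" where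
  "alternating_trilinear scale \<omega> \<longleftrightarrow>
     (\<forall>b c. Vector_Spaces.linear scale (*) (\<lambda>a. \<omega> a b c)) \<and>
     (\<forall>a c. Vector_Spaces.linear scale (*) (\<lambda>b. \<omega> a b c)) \<and>
     (\<forall>a b. Vector_Spaces.linear scale (*) (\<lambda>c. \<omega> a b c)) \<and>
     (\<forall>a c. \<omega> a a c = 0) \<and> (\<forall>a b. \<omega> a b b = 0) \<and> (\<forall>a b. \<omega> a b a = 0)"

definition omega_singular :: "('v \<Rightarrow> 'v \<Rightarrow> 'v \<Rightarrow> 'k::zero) \<Rightarrow> 'v set \<Rightarrow> bool" where
  "omega_singular \<omega> L \<longleftrightarrow> (\<forall>a\<in>L. \<forall>b\<in>L. \<forall>v. \<omega> a b v = 0)"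

end

theory Submission
  imports Defs
begin

(* Choose a basis e1, e2 of W and extend it to a basis of V. It suffices to find a nonzero
   x in W and y outside the line of x with omega(x, y, -) = 0; then span {x, y} is singular.
   If the kernel of y |-> omega(e2, y, -) is larger than the line of e2, take x = e2.
   Otherwise this map is injective modulo e2, hence surjective onto the linear forms
   vanishing at e2. Let H = {y. omega(e1, y, e2) = 0}; as dim V >= 4, H strictly contains
   span {e1, e2}, so H has a basis {e1, e2} + C with C nonempty. Solving
   omega(e1, c, -) = omega(e2, z, -) for c in C defines a linear operator T on span C with
   omega(e1, y, -) = omega(e2, a e1 + b e2 + T y, -). An eigenvector T y = l y, which exists
   over an algebraically closed field, yields x = e1 - l e2 and partner y + a e2. *)

text \<open>A vector space over a field; a separate locale keeps the constants defined below from
  clashing with their instances for real vector spaces.\<close>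
locale field_vector_space = vector_space scale
  for scale :: "'a::field \<Rightarrow> 'b::ab_group_add \<Rightarrow> 'b" (infixr \<open>*s\<close> 75)
begin

definition poly_apply :: "'a poly \<Rightarrow> ('b \<Rightarrow> 'b) \<Rightarrow> 'b \<Rightarrow> 'b" where
  "poly_apply p T v = (\<Sum>i\<le>degree p. coeff p i *s (T^^i) v)"

lemma poly_apply_upto:
  fixes p :: "'a poly"
  assumes "degree p \<le> N"
  shows "poly_apply p T v = (\<Sum>i\<le>N. coeff p i *s (T^^i) v)"
  unfolding poly_apply_def
  by (rule sum.mono_neutral_left) (use assms in \<open>auto simp: coeff_eq_0\<close>)

lemma poly_apply_add: "poly_apply (p + q :: 'a poly) T v = poly_apply p T v + poly_apply q T v"
proof -
  let ?N = "max (degree p) (degree q)"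
  have "poly_apply (p + q) T v = (\<Sum>i\<le>?N. coeff (p + q) i *s (T^^i) v)"
    by (rule poly_apply_upto) (meson degree_add_le max.cobounded1 max.cobounded2)
  also have "\<dots> = (\<Sum>i\<le>?N. coeff p i *s (T^^i) v) + (\<Sum>i\<le>?N. coeff q i *s (T^^i) v)"
    by (simp add: scale_left_distrib sum.distrib)
  also have "\<dots> = poly_apply p T v + poly_apply q T v"
    using poly_apply_upto[of p ?N T v] poly_apply_upto[of q ?N T v] by simp
  finally show ?thesis .
qed

lemma poly_apply_smult: "poly_apply (smult a p :: 'a poly) T v = a *s poly_apply p T v"
proof -
  have "poly_apply (smult a p) T v = (\<Sum>i\<le>degree p. coeff (smult a p) i *s (T^^i) v)"
    by (rule poly_apply_upto) (rule degree_smult_le)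
  then show ?thesis by (simp add: poly_apply_def scale_sum_right)
qed

lemma poly_apply_pCons_0:
  assumes "Vector_Spaces.linear scale scale T"
  shows "poly_apply (pCons 0 q :: 'a poly) T v = T (poly_apply q T v)"
proof -
  interpret T: Vector_Spaces.linear scale scale T by fact
  have "poly_apply (pCons 0 q) T v = (\<Sum>i\<le>Suc (degree q). coeff (pCons 0 q) i *s (T^^i) v)"
    by (rule poly_apply_upto) (simp add: degree_pCons_le)
  also have "\<dots> = (\<Sum>i\<le>degree q. coeff q i *s (T^^Suc i) v)"
    by (subst sum.atMost_Suc_shift) simp
  also have "\<dots> = T (poly_apply q T v)"
    by (simp add: poly_apply_def T.sum T.scale)
  finally show ?thesis .
qed

lemma poly_apply_linear_factor:
  assumes "Vector_Spaces.linear scale scale T"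
  shows "poly_apply ([:-a, 1:] * q :: 'a poly) T v = T (poly_apply q T v) - a *s poly_apply q T v"
proof -
  have "[:-a, 1:] * q = smult (-a) q + pCons 0 q" by simp
  then show ?thesis
    by (simp only: poly_apply_add poly_apply_smult poly_apply_pCons_0[OF assms])
       (simp add: algebra_simps)
qed

text \<open>If a nonzero polynomial annihilates a nonzero vector v of a T-invariant subspace S,
  then T has an eigenvector in S: split off a linear factor X - a of p (the field is
  algebraically closed) and either q(T) v is an eigenvector for a, or q annihilates v and
  has smaller degree.\<close>
lemma annihilated_vector_gives_eigenvector:
  assumes alg: "alg_closed_field TYPE('a)"
    and lin: "Vector_Spaces.linear scale scale T"
    and S: "subspace S" "\<And>x. x \<in> S \<Longrightarrow> T x \<in> S"
    and v: "v \<in> S" "v \<noteq> 0"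
  shows "(p :: 'a poly) \<noteq> 0 \<Longrightarrow> poly_apply p T v = 0 \<Longrightarrow> \<exists>y\<in>S. y \<noteq> 0 \<and> (\<exists>l. T y = l *s y)"
proof (induction "degree p" arbitrary: p rule: less_induct)
  case less
  have orbit: "(T^^i) v \<in> S" for i
    by (induction i) (auto simp: v S)
  show ?case
  proof (cases "degree p = 0")
    case True
    then have "poly_apply p T v = coeff p 0 *s v" by (simp add: poly_apply_def)
    moreover have "coeff p 0 \<noteq> 0" using True less.prems(1) leading_coeff_neq_0[of p] by simp
    ultimately show ?thesis using less.prems v by simp
  next
    case False
    then obtain a where "poly p a = 0" using alg unfolding alg_closed_field_def by blast
    then obtain q where pq: "p = [:-a, 1:] * q" using poly_eq_0_iff_dvd by blast
    have q0: "q \<noteq> 0" using pq less.prems(1) by auto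
    have "degree p = degree [:-a, 1:] + degree q"
      unfolding pq by (rule degree_mult_eq) (use q0 in auto)
    then have deg: "degree q < degree p" by simp
    let ?u = "poly_apply q T v"
    have u: "?u \<in> S"
      unfolding poly_apply_def by (intro subspace_sum subspace_scale S(1) orbit)
    have Tu: "T ?u - a *s ?u = 0"
      using less.prems(2) unfolding pq poly_apply_linear_factor[OF lin] .
    show ?thesis
    proof (cases "?u = 0")
      case True
      then show ?thesis using less.hyps[OF deg q0] by simp
    next
      case False
      then show ?thesis using u Tu by (intro bexI[of _ ?u]) auto
    qed
  qed
qed

lemma nontrivial_relation:
  assumes fin: "finite C" and f: "\<And>i. i \<le> card C \<Longrightarrow> f i \<in> span C"
  shows "\<exists>c. (\<exists>i\<le>card C. c i \<noteq> 0) \<and> (\<Sum>i\<le>card C. c i *s f i) = 0"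
proof (cases "inj_on f {..card C}")
  case True
  let ?F = "f ` {..card C}"
  have card_F: "card ?F = Suc (card C)"
    using card_image[OF True] by (simp only: card_atMost)
  have "\<not> independent ?F"
  proof
    assume "independent ?F"
    moreover have "?F \<subseteq> span C" using f by auto
    ultimately have "card ?F \<le> card C"
      using independent_span_bound[OF fin] by blast
    then show False using card_F by simp
  qed
  then obtain u where u: "\<exists>w\<in>?F. u w \<noteq> 0" "(\<Sum>w\<in>?F. u w *s w) = 0"
    unfolding dependent_finite[OF finite_imageI[OF finite_atMost]] by blast
  have "(\<Sum>i\<le>card C. u (f i) *s f i) = 0"
    using u(2) sum.reindex[OF True, of "\<lambda>w. u w *s w"] by simp
  moreover have "\<exists>i\<le>card C. u (f i) \<noteq> 0" using u(1) by auto
  ultimately show ?thesis by (intro exI[of _ "\<lambda>i. u (f i)"]) simp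
next
  case False
  then obtain i j where ij: "i \<le> card C" "j \<le> card C" "i \<noteq> j" "f i = f j"
    unfolding inj_on_def by auto
  define c where "c k = (if k = i then 1 else if k = j then -1 else (0::'a))" for k
  have "(\<lambda>k. c k *s f k) = (\<lambda>k. (if k = i then f i else 0) - (if k = j then f j else 0))"
    using ij by (auto simp: fun_eq_iff c_def)
  then have "(\<Sum>k\<le>card C. c k *s f k)
      = (\<Sum>k\<le>card C. if k = i then f i else 0) - (\<Sum>k\<le>card C. if k = j then f j else 0)"
    by (simp only: sum_subtractf)
  also have "\<dots> = 0" using ij by simp
  finally have "(\<Sum>k\<le>card C. c k *s f k) = 0" .
  moreover have "c i \<noteq> 0" by (simp add: c_def)
  ultimately show ?thesis using ij(1) by (intro exI[of _ c]) blast
qed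

text \<open>Over an algebraically closed field, a linear map leaving a nonzero finite-dimensional
  span invariant has an eigenvector there: some nonzero polynomial annihilates v,
  because the vectors T^i v are linearly dependent.\<close>
lemma eigenvector_exists:
  assumes alg: "alg_closed_field TYPE('a)"
    and lin: "Vector_Spaces.linear scale scale T"
    and fin: "finite C"
    and inv: "\<And>x. x \<in> span C \<Longrightarrow> T x \<in> span C"
    and v: "v \<in> span C" "v \<noteq> 0"
  shows "\<exists>y\<in>span C. y \<noteq> 0 \<and> (\<exists>l. T y = l *s y)"
proof -
  have orbit: "(T^^i) v \<in> span C" for i
    by (induction i) (auto simp: v inv)
  obtain c where c: "\<exists>i\<le>card C. c i \<noteq> 0" "(\<Sum>i\<le>card C. c i *s (T^^i) v) = 0"
    using nontrivial_relation[OF fin, of "\<lambda>i. (T^^i) v"] orbit by blast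
  define p where "p = (\<Sum>i\<le>card C. monom (c i) i)"
  have coeff_p: "coeff p k = (if k \<le> card C then c k else 0)" for k
    unfolding p_def by (simp add: coeff_sum coeff_monom)
  have "p \<noteq> 0" using c(1) coeff_p by (metis coeff_0)
  moreover have "degree p \<le> card C" by (rule degree_le) (simp add: coeff_p)
  then have "poly_apply p T v = 0"
    using c(2) by (simp add: poly_apply_upto coeff_p)
  ultimately show ?thesis
    using annihilated_vector_gives_eigenvector[OF alg lin subspace_span inv v] by blast
qed

lemma span_disjoint:
  assumes S: "independent S" "finite S" and A: "A \<subseteq> S" "A' \<subseteq> S" "A \<inter> A' = {}"
    and x: "x \<in> span A" "x \<in> span A'"
  shows "x = 0"
proof -
  have fin: "finite A" "finite A'"
    using A S(2) by (auto intro: finite_subset)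
  obtain u where u: "x = (\<Sum>v\<in>A. u v *s v)"
    using x(1) by (auto simp: span_finite fin(1))
  obtain u' where u': "x = (\<Sum>v\<in>A'. u' v *s v)"
    using x(2) by (auto simp: span_finite fin(2))
  define w where "w v = (if v \<in> A then u v else - u' v)" for v
  have wA: "(\<Sum>v\<in>A. w v *s v) = (\<Sum>v\<in>A. u v *s v)"
    by (intro sum.cong) (auto simp: w_def)
  have "(\<Sum>v\<in>A'. w v *s v) = (\<Sum>v\<in>A'. - (u' v *s v))"
    using A(3) by (intro sum.cong) (auto simp: w_def)
  then have wA': "(\<Sum>v\<in>A'. w v *s v) = - (\<Sum>v\<in>A'. u' v *s v)"
    by (simp add: sum_negf)
  have "(\<Sum>v\<in>A \<union> A'. w v *s v) = (\<Sum>v\<in>A. w v *s v) + (\<Sum>v\<in>A'. w v *s v)"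
    by (rule sum.union_disjoint[OF fin A(3)])
  also have "\<dots> = x + - x"
    by (simp only: wA wA' u[symmetric] u'[symmetric])
  finally have sum0: "(\<Sum>v\<in>A \<union> A'. w v *s v) = 0" by simp
  have "w v = 0" if "v \<in> A" for v
    by (rule independentD[OF S(1) _ _ sum0]) (use fin A that in auto)
  then show ?thesis using u(1) by (simp add: w_def)
qed

lemma kernel_meets_plane:
  assumes f: "Vector_Spaces.linear scale (*) f"
    and ind: "independent {r1, r2}" and ne: "r1 \<noteq> r2"
  obtains c where "c \<in> span {r1, r2}" "c \<noteq> 0" "f c = 0"
proof (cases "f r1 = 0")
  case True
  have "r1 \<noteq> 0" using ind dependent_zero by blast
  then show ?thesis using that[of r1] True by (simp add: span_base)
next
  case False
  interpret f: Vector_Spaces.linear scale "(*)" f by (rule f)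
  let ?c = "f r1 *s r2 - f r2 *s r1"
  have "?c \<noteq> 0"
  proof
    assume "?c = 0"
    then have eq: "f r1 *s r2 = f r2 *s r1" by simp
    define k where "k = inverse (f r1) * f r2"
    have "r2 = inverse (f r1) *s (f r1 *s r2)" using False by simp
    also have "\<dots> = k *s r1" by (simp only: eq scale_scale k_def)
    finally have "r2 \<in> span {r1}" by (simp add: span_base span_scale)
    moreover have "independent (insert r2 {r1})" using ind by (metis insert_commute)
    ultimately show False using ne by (simp add: independent_insert)
  qed
  moreover have "f ?c = 0" by (simp add: f.diff f.scale)
  moreover have "?c \<in> span {r1, r2}" by (simp add: span_base span_diff span_scale)
  ultimately show ?thesis using that by blast
qed

lemma linear_selector:
  assumes indC: "independent C"
    and basis: "\<And>c. c \<in> C \<Longrightarrow> \<exists>w\<in>span C. R c w"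
    and zero: "R 0 0"
    and comb: "\<And>k x y w w'. R x w \<Longrightarrow> R y w' \<Longrightarrow> R (k *s x + y) (k *s w + w')"
  obtains T where "Vector_Spaces.linear scale scale T" "\<And>y. T y \<in> span C"
    "\<And>y. y \<in> span C \<Longrightarrow> R y (T y)"
proof -
  obtain W where W: "\<And>c. c \<in> C \<Longrightarrow> W c \<in> span C \<and> R c (W c)" using basis by metis
  interpret pair: vector_space_pair scale scale ..
  define T where "T = pair.construct C W"
  have lin: "Vector_Spaces.linear scale scale T"
    unfolding T_def by (rule pair.linear_construct[OF indC])
  interpret T: Vector_Spaces.linear scale scale T by (rule lin)
  have into: "T y \<in> span C" for y
  proof -
    have "T y \<in> span (W ` C)" unfolding T_def by (rule pair.construct_in_span[OF indC])
    also have "\<dots> \<subseteq> span C" using W by (intro span_minimal) auto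
    finally show ?thesis .
  qed
  have "R y (T y)" if "y \<in> span C" for y
    using that
  proof (induction rule: span_induct_alt)
    case base
    then show ?case using zero by simp
  next
    case (step k c y)
    have "R c (T c)" using W[OF step.hyps] pair.construct_basis[OF indC step.hyps] by (simp add: T_def)
    then show ?case using comb[OF _ step.IH] by (simp add: T.add T.scale)
  qed
  then show ?thesis using that lin into by blast
qed

lemma shifted_pair_independent:
  assumes ind: "independent (insert e1 (insert e2 C))" and fin: "finite C"
    and C: "e1 \<notin> C" "e2 \<notin> C" and e12: "e1 \<noteq> e2" and y: "y \<in> span C" "y \<noteq> 0"
  shows "e1 - l *s e2 \<noteq> 0" "y + a *s e2 \<notin> span {e1 - l *s e2}"
proof -
  let ?S = "insert e1 (insert e2 C)"
  have finS: "finite ?S" using fin by simp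
  have "e1 \<notin> span {e2}"
  proof
    assume "e1 \<in> span {e2}"
    then have "e1 = 0"
      by (rule span_disjoint[OF ind finS, of "{e1}" "{e2}", rotated -1])
         (use e12 in \<open>auto simp: span_base\<close>)
    then show False using ind dependent_zero by blast
  qed
  then show "e1 - l *s e2 \<noteq> 0"
  proof (rule contrapos_nn)
    assume "e1 - l *s e2 = 0"
    then have "e1 = l *s e2" by simp
    then show "e1 \<in> span {e2}" by (simp add: span_base span_scale)
  qed
  show "y + a *s e2 \<notin> span {e1 - l *s e2}"
  proof
    assume "y + a *s e2 \<in> span {e1 - l *s e2}"
    then obtain k where "y + a *s e2 = k *s (e1 - l *s e2)" by (auto simp: span_singleton)
    then have "y = k *s e1 - (k * l + a) *s e2" by (simp add: algebra_simps)
    then have "y \<in> span {e1, e2}" by (simp add: span_base span_diff span_scale)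
    then have "y = 0"
      by (rule span_disjoint[OF ind finS, of C "{e1, e2}", rotated -1]) (use y(1) C in auto)
    then show False using y(2) by simp
  qed
qed

end

locale alternating_form = field_vector_space scale
  for scale :: "'a::field \<Rightarrow> 'b::ab_group_add \<Rightarrow> 'b" (infixr \<open>*s\<close> 75) +
  fixes \<omega> :: "'b \<Rightarrow> 'b \<Rightarrow> 'b \<Rightarrow> 'a"
  assumes alternating: "alternating_trilinear scale \<omega>"
begin

lemma add1: "\<omega> (x + y) b c = \<omega> x b c + \<omega> y b c"
  and add2: "\<omega> a (x + y) c = \<omega> a x c + \<omega> a y c"
  and add3: "\<omega> a b (x + y) = \<omega> a b x + \<omega> a b y"
  and scale1: "\<omega> (k *s x) b c = k * \<omega> x b c"
  and scale2: "\<omega> a (k *s x) c = k * \<omega> a x c"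
  and scale3: "\<omega> a b (k *s x) = k * \<omega> a b x"
  and same12: "\<omega> a a c = 0" and same23: "\<omega> a b b = 0" and same13: "\<omega> a b a = 0"
  using alternating unfolding alternating_trilinear_def Vector_Spaces.linear_iff by simp_all

lemma zero1: "\<omega> 0 b c = 0" using scale1[of 0 0 b c] by simp
lemma zero2: "\<omega> a 0 c = 0" using scale2[of a 0 0 c] by simp
lemma zero3: "\<omega> a b 0 = 0" using scale3[of a b 0 0] by simp

lemma diff1: "\<omega> (x - y) b c = \<omega> x b c - \<omega> y b c"
  using add1[of "x - y" y b c] by (simp add: algebra_simps)

lemma swap12: "\<omega> b a c = - \<omega> a b c"
proof -
  have "0 = \<omega> (a + b) (a + b) c" by (simp only: same12)
  also have "\<dots> = \<omega> a b c + \<omega> b a c" unfolding add1 add2 by (simp add: same12 add.commute)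
  finally show ?thesis by (metis add.commute eq_neg_iff_add_eq_0)
qed

lemma swap13: "\<omega> c b a = - \<omega> a b c"
proof -
  have "0 = \<omega> (a + c) b (a + c)" by (simp only: same13)
  also have "\<dots> = \<omega> a b c + \<omega> c b a" unfolding add1 add3 by (simp add: same13 add.commute)
  finally show ?thesis by (metis add.commute eq_neg_iff_add_eq_0)
qed

lemmas multilinear = zero1 zero2 zero3 add1 add2 add3 diff1 scale1 scale2 scale3 same12 same23 same13

lemma singular_plane:
  assumes x: "x \<noteq> 0" and y: "y \<notin> span {x}" and xy: "\<forall>v. \<omega> x y v = 0"
  shows "\<exists>L. subspace L \<and> dim L = 2 \<and> omega_singular \<omega> L \<and> x \<in> L"
proof (intro exI conjI)
  have "independent (insert y {x})" using x y by (simp add: independent_insert)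
  moreover have "x \<noteq> y" using y span_base[of x "{x}"] by auto
  ultimately show "dim (span {x, y}) = 2"
    by (simp add: dim_eq_card_independent insert_commute)
  have yx: "\<omega> y x v = 0" for v using xy swap12[of x y] by simp
  show "omega_singular \<omega> (span {x, y})"
    unfolding omega_singular_def
  proof (intro ballI allI)
    fix a b v assume "a \<in> span {x, y}" "b \<in> span {x, y}"
    then obtain k m k' m' where "a = k *s x + m *s y" "b = k' *s x + m' *s y"
      by (auto simp: span_breakdown_eq span_singleton algebra_simps eq_diff_eq)
    then show "\<omega> a b v = 0" by (simp add: multilinear xy yx)
  qed
qed (auto simp: span_base)

text \<open>The core construction for the case where \<omega>(e2, -, -) has no kernel beyond e2.\<close>
lemma twisted_operator:
  assumes indC: "independent C"
    and match: "\<And>c. c \<in> C \<Longrightarrow> \<exists>z\<in>span (insert e1 (insert e2 C)). \<forall>v. \<omega> e2 z v = \<omega> e1 c v"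
  obtains T where "Vector_Spaces.linear scale scale T" "\<And>y. T y \<in> span C"
    "\<And>y. y \<in> span C \<Longrightarrow> \<exists>a b. \<forall>v. \<omega> e2 (a *s e1 + b *s e2 + T y) v = \<omega> e1 y v"
proof (rule linear_selector[OF indC])
  note conclude = that
  define R where "R y w \<longleftrightarrow> (\<exists>a b. \<forall>v. \<omega> e2 (a *s e1 + b *s e2 + w) v = \<omega> e1 y v)" for y w
  show "\<exists>w\<in>span C. R c w" if c: "c \<in> C" for c
  proof -
    obtain z where z: "z \<in> span (insert e1 (insert e2 C))" "\<forall>v. \<omega> e2 z v = \<omega> e1 c v"
      using match[OF c] by blast
    then obtain a b where "z - a *s e1 - b *s e2 \<in> span C"
      by (auto simp: span_breakdown_eq diff_diff_eq)
    moreover have "z = a *s e1 + b *s e2 + (z - a *s e1 - b *s e2)" by simp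
    ultimately show ?thesis using z(2) unfolding R_def by metis
  qed
  show "R 0 0" unfolding R_def by (intro exI[of _ 0]) (simp add: multilinear)
  show "R (k *s x + y) (k *s w + w')" if Rx: "R x w" and Ry: "R y w'" for k x y w w'
  proof -
    obtain a b a' b' where
      ab: "\<forall>v. \<omega> e2 (a *s e1 + b *s e2 + w) v = \<omega> e1 x v" and
      ab': "\<forall>v. \<omega> e2 (a' *s e1 + b' *s e2 + w') v = \<omega> e1 y v"
      using Rx Ry unfolding R_def by blast
    have "\<omega> e2 ((k * a + a') *s e1 + (k * b + b') *s e2 + (k *s w + w')) v = \<omega> e1 (k *s x + y) v"
      for v using ab[rule_format, of v, symmetric] ab'[rule_format, of v, symmetric]
      by (simp add: multilinear algebra_simps)
    then show ?thesis unfolding R_def by blast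
  qed
  show thesis if "Vector_Spaces.linear scale scale T" "\<And>y. T y \<in> span C"
    "\<And>y. y \<in> span C \<Longrightarrow> R y (T y)" for T
    using that conclude[of T] unfolding R_def by blast
qed

lemma eigen_relation_singular:
  assumes "\<forall>v. \<omega> e2 (a *s e1 + b *s e2 + l *s y) v = \<omega> e1 y v"
  shows "\<forall>v. \<omega> (e1 - l *s e2) (y + a *s e2) v = 0"
proof
  fix v
  have "\<omega> e1 y v = a * \<omega> e2 e1 v + l * \<omega> e2 y v"
    using assms[rule_format, of v] by (simp add: multilinear)
  moreover have "\<omega> e1 e2 v = - \<omega> e2 e1 v" by (rule swap12)
  ultimately show "\<omega> (e1 - l *s e2) (y + a *s e2) v = 0"
    by (simp add: multilinear algebra_simps)
qed

lemma partner_from_operator: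
  assumes alg: "alg_closed_field TYPE('a)"
    and ind: "independent (insert e1 (insert e2 C))" and fin: "finite C"
    and C: "c0 \<in> C" "e1 \<notin> C" "e2 \<notin> C" and e12: "e1 \<noteq> e2"
    and match: "\<And>c. c \<in> C \<Longrightarrow> \<exists>z\<in>span (insert e1 (insert e2 C)). \<forall>v. \<omega> e2 z v = \<omega> e1 c v"
  shows "\<exists>x\<in>span {e1, e2}. x \<noteq> 0 \<and> (\<exists>y. y \<notin> span {x} \<and> (\<forall>v. \<omega> x y v = 0))"
proof -
  have indC: "independent C" using ind by (rule independent_mono) auto
  obtain T where lin: "Vector_Spaces.linear scale scale T" and into: "\<And>y. T y \<in> span C"
    and rel: "\<And>y. y \<in> span C \<Longrightarrow> \<exists>a b. \<forall>v. \<omega> e2 (a *s e1 + b *s e2 + T y) v = \<omega> e1 y v"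
    using twisted_operator[OF indC match] by blast
  have "c0 \<noteq> 0" using indC C(1) dependent_zero by blast
  then obtain y l where y: "y \<in> span C" "y \<noteq> 0" "T y = l *s y"
    using eigenvector_exists[OF alg lin fin into] C(1) span_base by blast
  obtain a b where "\<forall>v. \<omega> e2 (a *s e1 + b *s e2 + l *s y) v = \<omega> e1 y v"
    using rel[OF y(1)] y(3) by auto
  then have sing: "\<forall>v. \<omega> (e1 - l *s e2) (y + a *s e2) v = 0"
    by (rule eigen_relation_singular)
  moreover have "e1 - l *s e2 \<in> span {e1, e2}" by (simp add: span_base span_diff span_scale)
  ultimately show ?thesis
    using shifted_pair_independent[OF ind fin C(2,3) e12 y(1,2)] by blast
qed
end

locale alternating_form_basis =
  alternating_form scale \<omega> + finite_dimensional_vector_space scale Basis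
  for scale :: "'a::field \<Rightarrow> 'b::ab_group_add \<Rightarrow> 'b" (infixr \<open>*s\<close> 75)
    and \<omega> :: "'b \<Rightarrow> 'b \<Rightarrow> 'b \<Rightarrow> 'a" and Basis :: "'b set"
begin

text \<open>The vector whose Basis coordinates are those of the linear form \<omega>(e, y, -); it lets
  dimension arguments about the maps y \<mapsto> \<omega>(e, y, -) take place inside the space itself.\<close>
definition contract :: "'b \<Rightarrow> 'b \<Rightarrow> 'b" where
  "contract e y = (\<Sum>b\<in>Basis. \<omega> e y b *s b)"

lemma contract_linear: "Vector_Spaces.linear scale scale (contract e)"
  unfolding Vector_Spaces.linear_iff contract_def
  by (auto simp: multilinear scale_left_distrib sum.distrib scale_sum_right vector_space_axioms)

lemma contract_eq_iff: "contract e y = contract f z \<longleftrightarrow> (\<forall>v. \<omega> e y v = \<omega> f z v)"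
proof
  assume "contract e y = contract f z"
  then have diff0: "(\<Sum>b\<in>Basis. (\<omega> e y b - \<omega> f z b) *s b) = 0"
    unfolding contract_def by (simp add: scale_left_diff_distrib sum_subtractf)
  have coord: "\<omega> e y b = \<omega> f z b" if "b \<in> Basis" for b
    using independentD[OF independent_Basis finite_Basis subset_refl diff0 that] by simp
  show "\<forall>v. \<omega> e y v = \<omega> f z v"
  proof
    fix v
    have "v \<in> span Basis" by (simp add: span_Basis)
    then show "\<omega> e y v = \<omega> f z v"
      by (induction rule: span_induct_alt) (auto simp: multilinear coord)
  qed
qed (simp add: contract_def)

lemma contract_in_complement:
  assumes "b \<in> Basis" "\<omega> e y b = 0"
  shows "contract e y \<in> span (Basis - {b})"
proof -
  have "contract e y = \<omega> e y b *s b + (\<Sum>b'\<in>Basis - {b}. \<omega> e y b' *s b')"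
    unfolding contract_def using sum.remove[OF finite_Basis assms(1)] by simp
  moreover have "(\<Sum>b'\<in>Basis - {b}. \<omega> e y b' *s b') \<in> span (Basis - {b})"
    by (intro span_sum span_scale span_base)
  ultimately show ?thesis using assms(2) by simp
qed

text \<open>If the kernel of y \<mapsto> \<omega>(e, y, -) is just the line through the basis vector e,
  then every linear form \<omega>(u, c, -) that vanishes at e is of the form \<omega>(e, z, -):
  contract e is injective on the span of the other basis vectors and maps it into itself,
  hence onto it.\<close>
lemma solve_against_basis_vector:
  assumes e: "e \<in> Basis" and ker: "\<And>y. \<forall>v. \<omega> e y v = 0 \<Longrightarrow> y \<in> span {e}"
    and uc: "\<omega> u c e = 0"
  shows "\<exists>z. \<forall>v. \<omega> e z v = \<omega> u c v"
proof -
  let ?B = "Basis - {e}"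
  interpret pair: finite_dimensional_vector_space_pair_1 scale Basis scale ..
  interpret contract: Vector_Spaces.linear scale scale "contract e" by (rule contract_linear)
  have "inj_on (contract e) (span ?B)"
  proof (rule contract.inj_on_iff_eq_0[THEN iffD2, OF subspace_span], intro ballI impI)
    fix x assume x: "x \<in> span ?B" "contract e x = 0"
    have "contract e x = contract 0 0" using x(2) by (simp add: contract_def multilinear)
    then have "x \<in> span {e}" using ker by (simp add: contract_eq_iff multilinear)
    then show "x = 0"
      by (rule span_disjoint[OF independent_Basis finite_Basis, of ?B "{e}", rotated -1])
         (use e x(1) in auto)
  qed
  then have "dim (contract e ` span ?B) = dim (span ?B)"
    by (intro pair.dim_image_eq[OF contract_linear]) (simp add: span_span)
  moreover have "contract e ` span ?B \<subseteq> span ?B"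
    using contract_in_complement[OF e] by (auto simp: same13)
  moreover have "subspace (contract e ` span ?B)"
    by (rule contract.subspace_image) (rule subspace_span)
  ultimately have onto: "contract e ` span ?B = span ?B"
    by (simp add: subspace_dim_equal)
  have "contract u c \<in> span ?B" by (rule contract_in_complement[OF e uc])
  then obtain z where "contract e z = contract u c" using onto by (metis imageE)
  then show ?thesis by (auto simp: contract_eq_iff)
qed

lemma kernel_escapes_plane:
  assumes f: "Vector_Spaces.linear scale (*) f" and dim4: "card Basis \<ge> 4"
    and e: "e1 \<in> Basis" "e2 \<in> Basis"
  obtains c where "f c = 0" "c \<notin> span {e1, e2}"
proof -
  have "card {e1, e2} \<le> 2" by (simp add: card_insert_if)
  then have "card (Basis - {e1, e2}) \<ge> 2"
    using dim4 card_Diff_subset[of "{e1, e2}" Basis] e by auto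
  then obtain R where R: "R \<subseteq> Basis - {e1, e2}" "card R = 2"
    by (meson obtain_subset_with_card_n)
  then obtain r1 r2 where r: "R = {r1, r2}" "r1 \<noteq> r2" by (meson card_2_iff)
  have "independent {r1, r2}" by (rule independent_mono[OF independent_Basis]) (use R r in auto)
  then obtain c where c: "c \<in> span {r1, r2}" "c \<noteq> 0" "f c = 0"
    using kernel_meets_plane[OF f _ r(2)] by blast
  have "c \<notin> span {e1, e2}"
  proof
    assume "c \<in> span {e1, e2}"
    then have "c = 0"
      by (rule span_disjoint[OF independent_Basis finite_Basis, of "{r1, r2}", rotated -1])
         (use c(1) R r e in auto)
    then show False using c(2) by simp
  qed
  then show ?thesis using that c(3) by blast
qed

lemma extend_pair_basis:
  assumes H: "subspace H" "e1 \<in> H" "e2 \<in> H" "c0 \<in> H"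
    and ind: "independent {e1, e2}" and c0: "c0 \<notin> span {e1, e2}"
  obtains C where "finite C" "c0 \<in> C" "e1 \<notin> C" "e2 \<notin> C" "C \<subseteq> H"
    "independent (insert e1 (insert e2 C))" "H \<subseteq> span (insert e1 (insert e2 C))"
proof -
  have "independent {c0, e1, e2}" by (rule independent_insertI[OF c0 ind])
  then obtain B where B: "{c0, e1, e2} \<subseteq> B" "B \<subseteq> H" "independent B" "H \<subseteq> span B"
    using maximal_independent_subset_extend[of "{c0, e1, e2}" H] H by auto
  let ?C = "B - {e1, e2}"
  have "c0 \<noteq> e1" "c0 \<noteq> e2" using c0 by (auto simp: span_base)
  moreover have "B = insert e1 (insert e2 ?C)" using B(1) by auto
  ultimately show ?thesis
    using that[of ?C] B finiteI_independent[OF B(3)] by auto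
qed

lemma partner_exists:
  assumes alg: "alg_closed_field TYPE('a)" and dim4: "card Basis \<ge> 4"
    and e: "e1 \<in> Basis" "e2 \<in> Basis" "e1 \<noteq> e2"
  shows "\<exists>x\<in>span {e1, e2}. x \<noteq> 0 \<and> (\<exists>y. y \<notin> span {x} \<and> (\<forall>v. \<omega> x y v = 0))"
proof (cases "\<exists>y. y \<notin> span {e2} \<and> (\<forall>v. \<omega> e2 y v = 0)")
  case True
  moreover have "e2 \<noteq> 0" using e independent_Basis dependent_zero by blast
  ultimately show ?thesis by (auto simp: span_base)
next
  case False
  then have ker: "\<And>y. \<forall>v. \<omega> e2 y v = 0 \<Longrightarrow> y \<in> span {e2}" by blast
  define H where "H = {y. \<omega> e1 y e2 = 0}"
  have f: "Vector_Spaces.linear scale (*) (\<lambda>y. \<omega> e1 y e2)"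
    using alternating unfolding alternating_trilinear_def by blast
  have ind: "independent {e1, e2}" by (rule independent_mono[OF independent_Basis]) (use e in auto)
  obtain c0 where "\<omega> e1 c0 e2 = 0" "c0 \<notin> span {e1, e2}"
    using kernel_escapes_plane[OF f dim4 e(1,2)] by blast
  moreover have "subspace H" unfolding H_def subspace_def by (simp add: multilinear)
  ultimately obtain C where C: "finite C" "c0 \<in> C" "e1 \<notin> C" "e2 \<notin> C" "C \<subseteq> H"
    "independent (insert e1 (insert e2 C))" "H \<subseteq> span (insert e1 (insert e2 C))"
    using extend_pair_basis[of H e1 e2 c0] ind by (auto simp: H_def multilinear)
  have "\<exists>z\<in>span (insert e1 (insert e2 C)). \<forall>v. \<omega> e2 z v = \<omega> e1 c v" if "c \<in> C" for c
  proof -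
    have "\<omega> e1 c e2 = 0" using that C(5) by (auto simp: H_def)
    then obtain z where z: "\<forall>v. \<omega> e2 z v = \<omega> e1 c v"
      using solve_against_basis_vector[OF e(2) ker] by blast
    have "\<omega> e1 z e2 = - \<omega> e2 z e1" by (rule swap13)
    then have "z \<in> H" using z by (simp add: H_def same13)
    then show ?thesis using z C(7) by blast
  qed
  then show ?thesis using partner_from_operator[OF alg C(6,1,2,3,4) e(3)] by blast
qed

end

theorem mainTheorem6:
  fixes scale :: "'k::field \<Rightarrow> 'v::ab_group_add \<Rightarrow> 'v"
    and \<omega> :: "'v \<Rightarrow> 'v \<Rightarrow> 'v \<Rightarrow> 'k"
  assumes "alg_closed_field TYPE('k)"
    and "vector_space scale"
    and "\<exists>B. finite B \<and> module.span scale B = UNIV"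
    and "vector_space.dim scale (UNIV :: 'v set) \<ge> 4"
    and "alternating_trilinear scale \<omega>"
  shows "\<forall>W. module.subspace scale W \<and> vector_space.dim scale W = 2 \<longrightarrow>
           (\<exists>x\<in>W. x \<noteq> 0 \<and> (\<exists>L. module.subspace scale L \<and> vector_space.dim scale L = 2 \<and>
                                  omega_singular \<omega> L \<and> x \<in> L))"
proof (intro allI impI)
  fix W assume W: "module.subspace scale W \<and> vector_space.dim scale W = 2"
  interpret V: vector_space scale by (rule assms(2))
  obtain B where B: "B \<subseteq> W" "V.independent B" "W \<subseteq> V.span B" "card B = V.dim W"
    using V.basis_exists[of W] by blast
  have "card B = 2" using B(4) W by simp
  then obtain e1 e2 where e: "B = {e1, e2}" "e1 \<noteq> e2" by (metis card_2_iff)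
  have W_eq: "W = V.span {e1, e2}"
    using V.span_subspace[OF B(1,3)] W e(1) by (simp only:)
  have ind: "V.independent {e1, e2}" using B(2) e(1) by simp
  obtain Basis where Basis: "{e1, e2} \<subseteq> Basis" "V.independent Basis" "UNIV \<subseteq> V.span Basis"
    using V.maximal_independent_subset_extend[OF subset_UNIV ind] by metis
  obtain S where S: "finite S" "V.span S = UNIV" using assms(3) by blast
  have "finite Basis"
    using V.independent_span_bound[OF S(1) Basis(2)] S(2) by (simp only: subset_UNIV)
  then interpret F: alternating_form_basis scale \<omega> Basis
    using Basis(2,3) assms(5) by unfold_locales blast+
  have "card Basis \<ge> 4" using assms(4) F.dim_UNIV by simp
  then obtain x y where "x \<in> W" "x \<noteq> 0" "y \<notin> V.span {x}" "\<forall>v. \<omega> x y v = 0"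
    using F.partner_exists[OF assms(1)] Basis(1) e(2) W_eq by blast
  then show "\<exists>x\<in>W. x \<noteq> 0 \<and> (\<exists>L. V.subspace L \<and> V.dim L = 2 \<and> omega_singular \<omega> L \<and> x \<in> L)"
    using F.singular_plane by blast
qed

end
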